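(* Let $n\ge1$. For every $c\in M_n$ we have $C(c)\in M_n$ and $C^n(c)=c$, where $C$ is the crawl map.
   Context: $M_n$ is the set of integer sequences $c=(c_1,\dots,c_n)$ for which there is $0\le k\le n-1$ with $c_1=\dots=c_k=0$, $c_{k+1},\dots,c_n>0$, and $\sum_{i=k+1}^{n}c_i=n$. The crawl map $C:M_n\to M_n$ sends $c$ to $c'$ where, for $1\le i\le n-1$, $c'_i=\max\{0,c_{i+1}-1\}$ if $c_1,\dots,c_i\le1$, and $c'_i=c_{i+1}$ otherwise; and $c'_n=n-\sum_{i=1}^{n-1}c'_i$. *)

theory Defs
  imports Main
begin

(* A sequence c = (c_1,...,c_n) is represented as an int list of length n;
   c_i is  c ! (i - 1). *)

definition M :: "nat \<Rightarrow> int list set" where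
  "M n = {c. length c = n \<and>
      (\<exists>k. k \<le> n - 1 \<and>
           (\<forall>i. 1 \<le> i \<and> i \<le> k \<longrightarrow> c ! (i - 1) = 0) \<and>
           (\<forall>i. k + 1 \<le> i \<and> i \<le> n \<longrightarrow> c ! (i - 1) > 0) \<and>
           (\<Sum>i = k + 1..n. c ! (i - 1)) = int n)}"

definition crawl_entry :: "int list \<Rightarrow> nat \<Rightarrow> int" where
  "crawl_entry c i =
     (if \<forall>j. 1 \<le> j \<and> j \<le> i \<longrightarrow> c ! (j - 1) \<le> 1
      then max 0 (c ! i - 1)
      else c ! i)"

definition crawl :: "nat \<Rightarrow> int list \<Rightarrow> int list" where
  "crawl n c =
     map (crawl_entry c) [1..<n] @ [int n - (\<Sum>i = 1..n - 1. crawl_entry c i)]"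

end

theory Submission
  imports Defs
begin

(* An element of M n is encoded by a binary word w of length n ending in True:
   reading w from left to right, every True closes a part whose size is one plus the number
   of False letters since the previous True; the parts, padded with leading zeros, give the
   sequence  seq_of_word w.  Extend w to an antiperiodic infinite word u (u (i + n) = ~ u i)
   and view the encoded sequences as windows  u_s ... u_(s+n-1)  that start right after a
   False letter.  The central computation (crawl_window) shows that the crawl map moves the
   window to the position just after the next False letter of u.  Since every stretch of 2n
   letters of u contains exactly n False letters, n crawls move the window by exactly 2n,
   and u is 2n-periodic; hence C^n is the identity on M n. *)

section \<open>The crawl of sequences of the shape 0..0 1..1 a rest\<close>

lemma crawl_as_sum_list:
  "crawl n c = map (crawl_entry c) [1..<n] @ [int n - sum_list (map (crawl_entry c) [1..<n])]"
proof -
  have "{1..n-1} = set [1..<n]" by auto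
  then show ?thesis unfolding crawl_def by (metis sum_set_upt_conv_sum_list_nat)
qed

lemma crawl_entry_small:
  assumes "\<forall>j<i. c ! j \<le> 1"
  shows "crawl_entry c i = max 0 (c ! i - 1)"
  using assms unfolding crawl_entry_def by auto

lemma crawl_entry_large:
  assumes "m < i" and "c ! m > 1"
  shows "crawl_entry c i = c ! i"
proof -
  have "\<not> (\<forall>j. 1 \<le> j \<and> j \<le> i \<longrightarrow> c ! (j - 1) \<le> 1)"
    using assms by (metis add_diff_cancel_right' le_add2 not_le Suc_leI Suc_eq_plus1)
  then show ?thesis unfolding crawl_entry_def by (rule if_not_P)
qed

lemma nth_zeros_ones:
  "(replicate k 0 @ replicate r 1 @ a # rest) ! i =
   (if i < k then 0 else if i < k + r then 1 else if i = k + r then a else rest ! (i - k - r - 1))"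
  by (auto simp: nth_append nth_Cons')

text \<open>The crawl of 0^k 1^r a rest with a >= 2 is 0^(k+r-1) (a-1) rest (r+1): the ones and
  the first large entry are decremented, and the deficit r + 1 reappears at the end.\<close>
lemma crawl_zeros_ones:
  fixes a :: int
  assumes c: "c = replicate k 0 @ replicate r 1 @ a # rest" and len: "length c = n"
    and a: "a \<ge> 2" and kr: "k + r \<ge> 1" and sum: "sum_list c = int n"
  shows "crawl n c = replicate (k + r - 1) 0 @ (a - 1) # rest @ [int r + 1]"
proof -
  have n: "n = k + r + 1 + length rest" using c len by simp
  have c_nth: "c ! i = (if i < k then 0 else if i < k + r then 1
      else if i = k + r then a else rest ! (i - k - r - 1))" for i
    unfolding c by (rule nth_zeros_ones)
  have entries: "map (crawl_entry c) [1..<n] = replicate (k + r - 1) 0 @ (a - 1) # rest"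
  proof (rule nth_equalityI)
    fix j assume "j < length (map (crawl_entry c) [1..<n])"
    then have j: "j + 1 < n" by simp
    have lhs: "map (crawl_entry c) [1..<n] ! j = crawl_entry c (j + 1)" using j by simp
    have rhs: "(replicate (k + r - 1) 0 @ (a - 1) # rest) ! j =
      (if j < k + r - 1 then 0 else if j = k + r - 1 then a - 1 else rest ! (j - k - r))"
      using kr by (auto simp: nth_append nth_Cons')
    show "map (crawl_entry c) [1..<n] ! j = (replicate (k + r - 1) 0 @ (a - 1) # rest) ! j"
    proof (cases "j + 1 \<le> k + r")
      case True
      then have "crawl_entry c (j + 1) = max 0 (c ! (j + 1) - 1)"
        by (intro crawl_entry_small) (auto simp: c_nth)
      then show ?thesis using True lhs rhs a by (auto simp: c_nth)
    next
      case False
      then have "crawl_entry c (j + 1) = c ! (j + 1)"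
        using a by (intro crawl_entry_large[of "k + r"]) (simp_all add: c_nth)
      moreover have "c ! (j + 1) = rest ! (j - k - r)" using False by (simp add: c_nth)
      moreover have "\<not> j < k + r - 1" "j \<noteq> k + r - 1" using False kr by auto
      ultimately show ?thesis using lhs rhs by (simp only: if_False)
    qed
  qed (use n kr in simp)
  have "sum_list c = int r + a + sum_list rest" using c by (simp add: sum_list_replicate)
  then show ?thesis unfolding crawl_as_sum_list entries using sum by (simp add: sum_list_replicate)
qed

lemma crawl_ones:
  assumes "n \<ge> 1"
  shows "crawl n (replicate n 1) = replicate (n - 1) 0 @ [int n]"
proof -
  have "map (crawl_entry (replicate n 1)) [1..<n] = replicate (n - 1) 0"
    by (rule nth_equalityI) (auto simp: crawl_entry_def)
  then show ?thesis unfolding crawl_as_sum_list by (simp add: sum_list_replicate)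
qed

section \<open>Encoding M n by binary words\<close>

fun parts :: "nat \<Rightarrow> bool list \<Rightarrow> nat list" where
  "parts k [] = []"
| "parts k (b # w) = (if b then (k + 1) # parts 0 w else parts (k + 1) w)"

definition seq_of_word :: "bool list \<Rightarrow> int list" where
  "seq_of_word w = replicate (length w - length (parts 0 w)) 0 @ map int (parts 0 w)"

fun word_of_parts :: "nat list \<Rightarrow> bool list" where
  "word_of_parts [] = []"
| "word_of_parts (a # l) = replicate (a - 1) False @ True # word_of_parts l"

lemma parts_replicate_False: "parts k (replicate j False @ w) = parts (k + j) w"
  by (induction j arbitrary: k) auto

lemma parts_replicate_True: "parts 0 (replicate r True @ w) = replicate r 1 @ parts 0 w"
  by (induction r) auto

lemma parts_append_True: "parts k (X @ True # Y) = parts k (X @ [True]) @ parts 0 Y"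
  by (induction X arbitrary: k) auto

lemma parts_word_of_parts: "\<forall>x\<in>set l. x \<ge> 1 \<Longrightarrow> parts 0 (word_of_parts l) = l"
  by (induction l) (auto simp: parts_replicate_False)

lemma length_word_of_parts: "\<forall>x\<in>set l. x \<ge> 1 \<Longrightarrow> length (word_of_parts l) = sum_list l"
  by (induction l) auto

lemma last_word_of_parts: "l \<noteq> [] \<Longrightarrow> last (word_of_parts l) = True"
proof (induction l)
  case (Cons a l) then show ?case by (cases l) auto
qed simp

lemma length_parts: "length (parts k w) \<le> length w"
  by (induction k w rule: parts.induct) (auto intro: le_SucI)

lemma parts_positive: "x \<in> set (parts k w) \<Longrightarrow> x \<ge> 1"
  by (induction k w rule: parts.induct) (auto split: if_splits)

lemma sum_parts: "sum_list (parts k (X @ [True])) = k + length X + 1"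
  by (induction X arbitrary: k) auto

lemma parts_head:
  assumes "True \<in> set X"
  obtains p rest where "p \<ge> 1" and "\<And>k. parts k X = (k + p) # rest"
  using assms
proof (induction X arbitrary: thesis)
  case (Cons b Y)
  show ?case
  proof (cases b)
    case True then show ?thesis using Cons.prems(1)[of 1] by auto
  next
    case False
    then obtain p rest where "p \<ge> 1" "\<And>k. parts k Y = (k + p) # rest" using Cons by auto
    then show ?thesis using False Cons.prems(1)[of "p + 1" rest] by auto
  qed
qed simp

lemma sum_list_ge_length: "\<forall>x\<in>set l. (x::nat) \<ge> 1 \<Longrightarrow> sum_list l \<ge> length l"
  by (induction l) auto

lemma sum_seq_of_word: "sum_list (seq_of_word (X @ [True])) = int (length X + 1)"
  unfolding seq_of_word_def using sum_parts[of 0 X]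
  by (simp add: sum_list_replicate sum_list_of_nat)

lemma sum_suffix:
  "(\<Sum>i = length xs + 1..length (xs @ l). (xs @ l) ! (i - 1)) = (sum_list l :: 'a :: comm_monoid_add)"
proof -
  have "(\<Sum>i = length xs + 1..length (xs @ l). (xs @ l) ! (i - 1)) = (\<Sum>i<length l. l ! i)"
    by (rule sum.reindex_bij_witness[of _ "\<lambda>i. i + length xs + 1" "\<lambda>i. i - length xs - 1"])
      (auto simp: nth_append)
  then show ?thesis by (simp add: sum_list_sum_nth atLeast0LessThan)
qed

lemma M_normal_form:
  assumes "n \<ge> 1"
  shows "c \<in> M n \<longleftrightarrow> length c = n \<and>
    (\<exists>k l. c = replicate k 0 @ l \<and> l \<noteq> [] \<and> (\<forall>x\<in>set l. 0 < x) \<and> sum_list l = int n)"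
    (is "_ \<longleftrightarrow> _ \<and> ?normal")
proof
  assume "c \<in> M n"
  then obtain k where len: "length c = n" and k: "k \<le> n - 1"
    and zeros: "\<forall>i. 1 \<le> i \<and> i \<le> k \<longrightarrow> c ! (i - 1) = 0"
    and pos: "\<forall>i. k + 1 \<le> i \<and> i \<le> n \<longrightarrow> c ! (i - 1) > 0"
    and sum: "(\<Sum>i = k + 1..n. c ! (i - 1)) = int n" unfolding M_def by blast
  have kn: "k < n" using k assms by simp
  have "take k c = replicate k 0"
  proof (rule nth_equalityI)
    fix i assume "i < length (take k c)"
    then show "take k c ! i = replicate k 0 ! i" using zeros[rule_format, of "i + 1"] by simp
  qed (use kn len in simp)
  then have "c = replicate k 0 @ drop k c" by (metis append_take_drop_id)
  moreover have "\<forall>x\<in>set (drop k c). 0 < x"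
  proof
    fix x assume "x \<in> set (drop k c)"
    then obtain i where "i < n - k" "x = c ! (k + i)" using len by (auto simp: in_set_conv_nth)
    then show "0 < x" using pos[rule_format, of "k + i + 1"] by simp
  qed
  moreover have "sum_list (drop k c) = int n"
    using sum sum_suffix[of "take k c" "drop k c"] len kn by simp
  ultimately show "length c = n \<and> ?normal" using len kn by (metis drop_eq_Nil leD)
next
  assume "length c = n \<and> ?normal"
  then obtain k l where len: "length c = n" and c: "c = replicate k 0 @ l" and "l \<noteq> []"
    and pos: "\<forall>x\<in>set l. 0 < x" and sum: "sum_list l = int n" by blast
  have "k \<le> n - 1" using len c \<open>l \<noteq> []\<close> by (cases l) auto
  moreover have "\<forall>i. 1 \<le> i \<and> i \<le> k \<longrightarrow> c ! (i - 1) = 0" using c by (auto simp: nth_append)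
  moreover have "\<forall>i. k + 1 \<le> i \<and> i \<le> n \<longrightarrow> c ! (i - 1) > 0"
    using pos len c by (auto simp: nth_append)
  moreover have "(\<Sum>i = k + 1..n. c ! (i - 1)) = int n"
    using sum sum_suffix[of "replicate k 0" l] c len by simp
  ultimately show "c \<in> M n" unfolding M_def using len by blast
qed

lemma seq_of_word_in_M:
  assumes "length (X @ [True]) = n"
  shows "seq_of_word (X @ [True]) \<in> M n"
proof -
  let ?p = "parts 0 (X @ [True])"
  have "n \<ge> 1" using assms by simp
  have "?p \<noteq> []" using sum_parts[of 0 X] by auto
  have "sum_list (map int ?p) = int n"
    using sum_parts[of 0 X] assms by (simp add: sum_list_of_nat)
  then show ?thesis
    unfolding M_normal_form[OF \<open>n \<ge> 1\<close>] seq_of_word_def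
    using assms length_parts[of 0 "X @ [True]"] parts_positive[of _ 0 "X @ [True]"] \<open>?p \<noteq> []\<close>
    by (intro conjI exI[of _ "length (X @ [True]) - length ?p"] exI[of _ "map int ?p"]) force+
qed

lemma M_word:
  assumes "n \<ge> 1" and "c \<in> M n"
  obtains X where "length (X @ [True]) = n" and "c = seq_of_word (X @ [True])"
proof -
  obtain k l where len: "length c = n" and c: "c = replicate k 0 @ l" and "l \<noteq> []"
    and pos: "\<forall>x\<in>set l. 0 < x" and sum: "sum_list l = int n"
    using assms M_normal_form by blast
  define l' where "l' = map nat l"
  have pos': "\<forall>x\<in>set l'. x \<ge> 1" using pos unfolding l'_def by auto
  have l: "map int l' = l" using pos unfolding l'_def by (induction l) auto
  have "sum_list l' = n" using sum l by (metis nat_int sum_list_of_nat)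
  then have length_w: "length (word_of_parts l') = n" using length_word_of_parts[OF pos'] by simp
  have "word_of_parts l' \<noteq> []" "last (word_of_parts l') = True"
    using length_w assms(1) last_word_of_parts \<open>l \<noteq> []\<close> unfolding l'_def by auto
  then obtain X where X: "word_of_parts l' = X @ [True]" by (metis append_butlast_last_id)
  have "c = seq_of_word (word_of_parts l')"
    unfolding seq_of_word_def parts_word_of_parts[OF pos'] length_w using c len l by auto
  then show thesis using that length_w X by simp
qed

text \<open>On words, the crawl removes the initial block 1^r 0 and appends 0^r 1 (here 1 = True):
  a rotation of the word in which the moved letters are complemented.\<close>
lemma crawl_seq_of_word:
  assumes len: "length (replicate r True @ False # Y @ [True]) = n"
  shows "crawl n (seq_of_word (replicate r True @ False # Y @ [True])) =
         seq_of_word (Y @ True # replicate r False @ [True])"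
proof -
  let ?w = "replicate r True @ False # Y @ [True]" and ?w' = "Y @ True # replicate r False @ [True]"
  obtain p rest where p: "p \<ge> 1" and head: "\<And>k. parts k (Y @ [True]) = (k + p) # rest"
    using parts_head[of "Y @ [True]"] by auto
  have parts_w: "parts 0 ?w = replicate r 1 @ (1 + p) # rest"
    by (simp add: parts_replicate_True head)
  have parts_w': "parts 0 ?w' = p # rest @ [r + 1]"
    using parts_append_True[of 0 Y "replicate r False @ [True]"] head[of 0]
      parts_replicate_False[of 0 r "[True]"] by simp
  have "sum_list (parts 0 ((replicate r True @ False # Y) @ [True])) = n"
    using sum_parts[of 0 "replicate r True @ False # Y"] len by simp
  then have sum: "r + (1 + p) + sum_list rest = n" using parts_w by (simp add: sum_list_replicate)
  have "length rest \<le> sum_list rest"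
    using sum_list_ge_length parts_positive[of _ 0 "Y @ [True]"] head[of 0] by auto
  then have large: "n \<ge> r + 2 + length rest" using sum p by linarith
  define k where "k = n - (r + 1 + length rest)"
  have seq_w: "seq_of_word ?w = replicate k 0 @ replicate r 1 @ int (1 + p) # map int rest"
    unfolding seq_of_word_def parts_w len k_def by simp
  have "crawl n (seq_of_word ?w) = replicate (k + r - 1) 0 @ (int (1 + p) - 1) # map int rest @ [int r + 1]"
  proof (rule crawl_zeros_ones[OF seq_w])
    show "length (seq_of_word ?w) = n" unfolding seq_w k_def using large by simp
    show "sum_list (seq_of_word ?w) = int n"
      using sum_seq_of_word[of "replicate r True @ False # Y"] len by simp
  qed (use p large k_def in auto)
  also have "\<dots> = seq_of_word ?w'"
    unfolding seq_of_word_def parts_w' using len large k_def by simp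
  finally show ?thesis .
qed

lemma crawl_seq_of_word_True:
  assumes "n \<ge> 1"
  shows "crawl n (seq_of_word (replicate n True)) = seq_of_word (replicate (n - 1) False @ [True])"
proof -
  have "seq_of_word (replicate n True) = replicate n 1"
    unfolding seq_of_word_def using parts_replicate_True[of n "[]"] by simp
  moreover have "seq_of_word (replicate (n - 1) False @ [True]) = replicate (n - 1) 0 @ [int n]"
    unfolding seq_of_word_def using parts_replicate_False[of 0 "n - 1" "[True]"] assms by simp
  ultimately show ?thesis using crawl_ones[OF assms] by simp
qed

section \<open>Windows of antiperiodic infinite words\<close>

definition window :: "(nat \<Rightarrow> bool) \<Rightarrow> nat \<Rightarrow> nat \<Rightarrow> bool list" where
  "window u n s = map u [s..<s + n]"

definition after_false :: "(nat \<Rightarrow> bool) \<Rightarrow> nat \<Rightarrow> bool" where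
  "after_false u s \<longleftrightarrow> s \<ge> 1 \<and> \<not> u (s - 1)"

definition next_false :: "(nat \<Rightarrow> bool) \<Rightarrow> nat \<Rightarrow> nat" where
  "next_false u s = (LEAST t. s \<le> t \<and> \<not> u t)"

text \<open>The position just after the next False letter; the crawl moves windows there.\<close>
definition jump :: "(nat \<Rightarrow> bool) \<Rightarrow> nat \<Rightarrow> nat" where
  "jump u s = next_false u s + 1"

definition false_count :: "(nat \<Rightarrow> bool) \<Rightarrow> nat \<Rightarrow> nat" where
  "false_count u t = (\<Sum>i<t. if u i then 0 else 1)"

lemma length_window [simp]: "length (window u n s) = n"
  unfolding window_def by simp

lemma map_upt_split: "a \<le> b \<Longrightarrow> b \<le> c \<Longrightarrow> map u [a..<c] = map u [a..<b] @ map u [b..<c]"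
  by (metis le_add_diff_inverse map_append upt_add_eq_append)

lemma map_upt_const: "(\<And>i. a \<le> i \<Longrightarrow> i < b \<Longrightarrow> u i = x) \<Longrightarrow> map u [a..<b] = replicate (b - a) x"
  by (rule nth_equalityI) auto

lemma false_count_split:
  "a \<le> b \<Longrightarrow> false_count u b = false_count u a + (\<Sum>i = a..<b. if u i then 0 else 1)"
proof (induction b rule: dec_induct)
  case (step b) then show ?case by (simp add: false_count_def)
qed simp

lemma false_count_less:
  assumes "after_false u t'" and "t < t'"
  shows "false_count u t < false_count u t'"
proof -
  have "(if u (t' - 1) then 0 else 1::nat) \<le> (\<Sum>i = t..<t'. if u i then 0 else 1)"
    by (rule member_le_sum) (use assms in \<open>auto simp: after_false_def\<close>)
  then show ?thesis
    using false_count_split[of t t' u] assms by (simp add: after_false_def)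
qed

locale antiperiodic =
  fixes u :: "nat \<Rightarrow> bool" and n :: nat
  assumes antiperiodic: "u (i + n) = (\<not> u i)"
begin

text \<open>The relation u (0 + n) = \<not> u 0 forces n > 0, and u is 2n-periodic.\<close>
lemma period_length_pos: "n \<ge> 1"
  using antiperiodic[of 0] by (cases n) auto

lemma periodic: "u (i + 2 * n) = u i"
  using antiperiodic[of i] antiperiodic[of "i + n"] by (simp add: mult_2 add.assoc)

lemma map_upt_shift: "map u [a + n..<b + n] = map (\<lambda>i. \<not> u i) [a..<b]"
proof (rule nth_equalityI)
  fix i assume "i < length (map u [a + n..<b + n])"
  then show "map u [a + n..<b + n] ! i = map (\<lambda>i. \<not> u i) [a..<b] ! i"
    using antiperiodic[of "a + i"] by (simp add: add.commute add.left_commute)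
qed simp

text \<open>A False letter occurs at s or at s + n, so next_false is well defined and at most s + n.\<close>
lemma next_false:
  shows "s \<le> next_false u s" and "\<not> u (next_false u s)" and "next_false u s \<le> s + n"
    and "\<And>i. s \<le> i \<Longrightarrow> i < next_false u s \<Longrightarrow> u i"
proof -
  have "\<exists>t. s \<le> t \<and> \<not> u t" using antiperiodic[of s] le_add1 order_refl by blast
  then have "s \<le> next_false u s \<and> \<not> u (next_false u s)"
    unfolding next_false_def by (rule LeastI_ex)
  then show "s \<le> next_false u s" and "\<not> u (next_false u s)" by auto
  show "next_false u s \<le> s + n"
  proof (cases "u s")
    case True
    then have "\<not> u (s + n)" using antiperiodic by simp
    then show ?thesis unfolding next_false_def by (auto intro: Least_le)
  next
    case False
    then have "next_false u s \<le> s" unfolding next_false_def by (auto intro: Least_le)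
    then show ?thesis by simp
  qed
  show "u i" if "s \<le> i" "i < next_false u s" for i
    using not_less_Least[of i "\<lambda>t. s \<le> t \<and> \<not> u t"] that unfolding next_false_def by blast
qed

text \<open>A window starting after a False letter ends with True, since u (s - 1 + n) = \<not> u (s - 1).\<close>
lemma last_letter:
  assumes "after_false u s"
  shows "u (s + n - 1)"
  using antiperiodic[of "s - 1"] assms by (simp add: after_false_def)

lemma window_last:
  assumes "after_false u s"
  shows "window u n s = map u [s..<s + n - 1] @ [True]"
proof -
  have "[s..<s + n] = [s..<s + n - 1] @ [s + n - 1]"
    using period_length_pos upt_Suc_append[of s "s + n - 1"] by simp
  then show ?thesis using last_letter[OF assms] unfolding window_def by simp
qed

lemma window_in_M:
  assumes "after_false u s"
  shows "seq_of_word (window u n s) \<in> M n"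
  using seq_of_word_in_M[of "map u [s..<s + n - 1]" n] window_last[OF assms]
    length_window[of u n s] by simp

text \<open>If the window contains a False letter, moving the window past its first False letter
  is exactly the word operation of crawl_seq_of_word.\<close>
lemma windows_around_false:
  assumes "after_false u s" and inside: "next_false u s < s + n"
  defines "t \<equiv> next_false u s"
  shows "window u n s = replicate (t - s) True @ False # map u [t + 1..<s + n - 1] @ [True]"
    and "window u n (jump u s) = map u [t + 1..<s + n - 1] @ True # replicate (t - s) False @ [True]"
proof -
  have "t \<noteq> s + n - 1" using last_letter[OF assms(1)] next_false(2)[of s] unfolding t_def by auto
  then have t: "s \<le> t" "t + 1 \<le> s + n - 1" using inside next_false(1)[of s] unfolding t_def by auto
  have trues: "map u [s..<t] = replicate (t - s) True"
    by (rule map_upt_const) (use next_false(4) t_def in auto)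
  have "map u [s..<s + n - 1] = map u [s..<t] @ map u [t..<s + n - 1]"
    by (rule map_upt_split) (use t in auto)
  then show "window u n s = replicate (t - s) True @ False # map u [t + 1..<s + n - 1] @ [True]"
    using window_last[OF assms(1)] trues t next_false(2)[of s] unfolding t_def
    by (simp add: upt_conv_Cons)
  have "map u [t + 1..<t + 1 + n] = map u [t + 1..<s + n - 1] @ map u [s + n - 1..<t + 1 + n]"
    by (rule map_upt_split) (use t in auto)
  also have "map u [s + n - 1..<t + 1 + n] = u (s + n - 1) # map u [s + n..<t + n] @ [u (t + n)]"
    using t period_length_pos by (simp add: upt_conv_Cons)
  also have "map u [s + n..<t + n] = replicate (t - s) False"
    using map_upt_shift[of s t] arg_cong[OF trues, of "map Not"] by (simp add: comp_def)
  finally show "window u n (jump u s) = map u [t + 1..<s + n - 1] @ True # replicate (t - s) False @ [True]"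
    using last_letter[OF assms(1)] antiperiodic[of t] next_false(2)[of s]
    unfolding window_def jump_def t_def[symmetric] by simp
qed

lemma windows_all_True:
  assumes "next_false u s = s + n"
  shows "window u n s = replicate n True"
    and "window u n (jump u s) = replicate (n - 1) False @ [True]"
proof -
  have trues: "map u [s..<s + n] = replicate n True"
    using map_upt_const[of s "s + n" u True] next_false(4)[of s] assms by simp
  then show "window u n s = replicate n True" unfolding window_def .
  have "[s + 1 + n..<s + n + n + 1] = [s + 1 + n..<s + n + n] @ [s + n + n]"
    using period_length_pos by simp
  moreover have "map u [s + 1 + n..<s + n + n] = replicate (n - 1) False"
  proof -
    have "map (\<lambda>i. \<not> u i) [s + 1..<s + n] = replicate (s + n - (s + 1)) False"
      by (rule map_upt_const) (use next_false(4)[of s] assms in auto)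
    then show ?thesis using map_upt_shift[of "s + 1" "s + n"] by (simp add: add.commute add.left_commute)
  qed
  moreover have "u (s + n + n)"
    using periodic[of s] next_false(4)[of s s] assms period_length_pos by (simp add: mult_2 add.assoc)
  ultimately show "window u n (jump u s) = replicate (n - 1) False @ [True]"
    unfolding window_def jump_def assms by (simp add: add.commute add.left_commute)
qed

lemma crawl_window:
  assumes "after_false u s"
  shows "crawl n (seq_of_word (window u n s)) = seq_of_word (window u n (jump u s))"
proof (cases "next_false u s < s + n")
  case True
  show ?thesis
    unfolding windows_around_false[OF assms True]
    by (rule crawl_seq_of_word)
      (use length_window[of u n s] in \<open>simp only: windows_around_false(1)[OF assms True]\<close>)
next
  case False
  then have all_True: "next_false u s = s + n" using next_false(3)[of s] by simp
  show ?thesis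
    unfolding windows_all_True[OF all_True] by (rule crawl_seq_of_word_True[OF period_length_pos])
qed

lemma after_false_jump: "after_false u (jump u s)"
  using next_false(2)[of s] by (simp add: after_false_def jump_def)

lemma false_count_jump: "false_count u (jump u s) = false_count u s + 1"
proof -
  have "(\<Sum>i = s..<next_false u s. if u i then 0 else 1::nat) = 0"
    using next_false(4)[of s] by simp
  then have "(\<Sum>i = s..<jump u s. if u i then 0 else 1::nat) = 1"
    using next_false(1,2)[of s] by (simp add: jump_def)
  then show ?thesis using false_count_split[of s "jump u s" u] next_false(1)[of s]
    by (simp add: jump_def)
qed

lemma false_count_period: "false_count u (s + 2 * n) = false_count u s + n"
proof -
  let ?f = "\<lambda>i. if u i then 0 else 1::nat"
  have pairs: "(\<Sum>i = s..<s + m. ?f i + ?f (i + n)) = m" for m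
    by (induction m) (simp_all add: antiperiodic)
  have "(\<Sum>i = s..<s + 2 * n. ?f i) = (\<Sum>i = s..<s + n. ?f i) + (\<Sum>i = s + n..<s + n + n. ?f i)"
    using sum.atLeastLessThan_concat[of s "s + n" "s + n + n" ?f] by (simp add: mult_2 add.assoc)
  also have "(\<Sum>i = s + n..<s + n + n. ?f i) = (\<Sum>i = s..<s + n. ?f (i + n))"
    using sum.shift_bounds_nat_ivl[of ?f s n "s + n"] by (simp add: add.commute)
  finally have "(\<Sum>i = s..<s + 2 * n. ?f i) = n" using pairs[of n] by (simp add: sum.distrib)
  then show ?thesis using false_count_split[of s "s + 2 * n" u] by simp
qed

lemma jump_iterate:
  assumes "after_false u s"
  shows "after_false u ((jump u ^^ j) s)" and "false_count u ((jump u ^^ j) s) = false_count u s + j"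
proof -
  show "after_false u ((jump u ^^ j) s)" using assms after_false_jump by (cases j) auto
  show "false_count u ((jump u ^^ j) s) = false_count u s + j"
    by (induction j) (simp_all add: false_count_jump)
qed

text \<open>n jumps move a window by exactly one period 2n: both positions follow a False letter
  and have the same false count, which is strictly increasing on such positions.\<close>
lemma jump_n_times:
  assumes "after_false u s"
  shows "(jump u ^^ n) s = s + 2 * n"
proof -
  let ?t = "(jump u ^^ n) s"
  have "u (s - 1 + 2 * n) = u (s - 1)" by (rule periodic)
  then have after: "after_false u (s + 2 * n)"
    using assms period_length_pos by (simp add: after_false_def)
  have count: "false_count u ?t = false_count u (s + 2 * n)"
    using jump_iterate(2)[OF assms, of n] false_count_period[of s] by simp
  show ?thesis
  proof (rule linorder_cases[of ?t "s + 2 * n"])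
    assume "?t < s + 2 * n"
    then show ?thesis using false_count_less[OF after, of ?t] count by simp
  next
    assume "s + 2 * n < ?t"
    then show ?thesis using false_count_less[OF jump_iterate(1)[OF assms, of n], of "s + 2 * n"] count by simp
  qed
qed

lemma window_period: "window u n (s + 2 * n) = window u n s"
proof (rule nth_equalityI)
  fix i assume "i < length (window u n (s + 2 * n))"
  then show "window u n (s + 2 * n) ! i = window u n s ! i"
    using periodic[of "s + i"] by (simp add: window_def ac_simps)
qed simp

lemma crawl_iterate:
  assumes "after_false u s"
  shows "(crawl n ^^ j) (seq_of_word (window u n s)) = seq_of_word (window u n ((jump u ^^ j) s))"
proof (induction j)
  case (Suc j)
  then show ?case using crawl_window[OF jump_iterate(1)[OF assms, of j]] by simp
qed simp

lemma crawl_n_times: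
  assumes "after_false u s"
  shows "(crawl n ^^ n) (seq_of_word (window u n s)) = seq_of_word (window u n s)"
  using crawl_iterate[OF assms, of n] jump_n_times[OF assms] window_period[of s] by simp

end

text \<open>Every element of M n is encoded by a window, after a False letter, of an antiperiodic
  word: extend its word w to u = w, \<not>w, w, \<not>w, ... and take the third window.\<close>
lemma M_window:
  assumes "n \<ge> 1" and "c \<in> M n"
  obtains u where "antiperiodic u n" and "after_false u (2 * n)"
    and "c = seq_of_word (window u n (2 * n))"
proof -
  obtain X where len: "length (X @ [True]) = n" and c: "c = seq_of_word (X @ [True])"
    using M_word[OF assms] .
  define w where "w = X @ [True]"
  define u where "u i = (w ! (i mod n) \<noteq> odd (i div n))" for i
  have "antiperiodic u n"
  proof
    fix i
    have "(i + n) div n = Suc (i div n)" "(i + n) mod n = i mod n"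
      using assms(1) by (simp_all add: div_add_self2)
    then show "u (i + n) = (\<not> u i)" by (simp add: u_def)
  qed
  moreover have "window u n (2 * n) = w"
    by (rule nth_equalityI) (use len in \<open>simp_all add: window_def u_def w_def\<close>)
  moreover have "after_false u (2 * n)"
  proof -
    have last: "2 * n - 1 = (n - 1) + n" using assms(1) by simp
    have "((n - 1) + n) div n = 1" using assms(1) by (subst div_add_self2) simp_all
    moreover have "((n - 1) + n) mod n = n - 1" using assms(1) by (subst mod_add_self2) simp
    ultimately have "(2 * n - 1) div n = 1" "(2 * n - 1) mod n = n - 1" unfolding last .
    moreover have "w ! (n - 1)"
    proof -
      have "n - 1 = length X" using len by simp
      then show ?thesis by (simp add: w_def)
    qed
    ultimately show ?thesis using assms(1) by (simp add: after_false_def u_def)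
  qed
  ultimately show thesis using that c w_def by simp
qed

theorem mainTheorem13:
  fixes n :: nat and c :: "int list"
  assumes "n \<ge> 1" and "c \<in> M n"
  shows "crawl n c \<in> M n \<and> (crawl n ^^ n) c = c"
proof -
  obtain u where "antiperiodic u n" and after: "after_false u (2 * n)"
    and c: "c = seq_of_word (window u n (2 * n))"
    using M_window[OF assms] .
  interpret antiperiodic u n by fact
  have "crawl n c = seq_of_word (window u n (jump u (2 * n)))"
    using crawl_window[OF after] c by simp
  moreover have "seq_of_word (window u n (jump u (2 * n))) \<in> M n"
    using window_in_M[OF after_false_jump] .
  moreover have "(crawl n ^^ n) c = c"
    using crawl_n_times[OF after] c by simp
  ultimately show ?thesis by simp
qed

end
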